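(* Let $\mathcal{G}$ and $\mathcal{H}$ be regular families of finite subsets of $\mathbb{N}$. Suppose $F_1<F_2<\dots<F_k$ are finite subsets of $\mathbb{N}$ with $\bigcup_{j=1}^kF_j\in\mathcal{G}[\mathcal{H}]$. If $F_j\notin\mathcal{H}$ for all $1\le j\le k$, then $\{\min F_1,\dots,\min F_k\}\in\mathcal{G}$.
   Context: For finite $E,F\subseteq\mathbb{N}$, $E<F$ means $\max E<\min F$. A family $\mathcal{F}$ of finite subsets of $\mathbb{N}$ is regular if it is hereditary (closed under subsets), spreading (if $\{n_1<\dots<n_k\}\in\mathcal{F}$ and $m_1<\dots<m_k$ with $m_i\ge n_i$, then $\{m_1,\dots,m_k\}\in\mathcal{F}$), and compact in $2^{\mathbb{N}}$ (product topology). A sequence $E_1<\dots<E_k$ is $\mathcal{M}$-admissible if $\{\min E_1,\dots,\min E_k\}\in\mathcal{M}$. For regular $\mathcal{M},\mathcal{N}$, $\mathcal{M}[\mathcal{N}]=\{\bigcup_{i=1}^kF_i: F_i\in\mathcal{N}\text{ for all }i,\ \{F_1,\dots,F_k\}\text{ is }\mathcal{M}\text{-admissible}\}$. *)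

theory Defs
  imports "HOL-Analysis.Analysis"
begin

definition hereditary :: "nat set set \<Rightarrow> bool" where
  "hereditary F \<longleftrightarrow> (\<forall>A\<in>F. \<forall>B. B \<subseteq> A \<longrightarrow> B \<in> F)"

text \<open>Spreading: if {n_1<...<n_k} is in F and m_1<...<m_k with m_i >= n_i then
  {m_1,...,m_k} is in F; equivalently the image of A under any map strictly
  increasing on A with f n >= n.\<close>
definition spreading :: "nat set set \<Rightarrow> bool" where
  "spreading F \<longleftrightarrow>
     (\<forall>A\<in>F. \<forall>f. strict_mono_on A f \<and> (\<forall>n\<in>A. n \<le> f n) \<longrightarrow> f ` A \<in> F)"

text \<open>Compactness in the Cantor space 2^N (product of discrete two-point spaces),
  identifying a set with its indicator function.\<close>
definition compact_family :: "nat set set \<Rightarrow> bool" where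
  "compact_family F \<longleftrightarrow>
     compactin (product_topology (\<lambda>_::nat. discrete_topology (UNIV::bool set)) UNIV)
               ((\<lambda>A n. n \<in> A) ` F)"

definition regular_family :: "nat set set \<Rightarrow> bool" where
  "regular_family F \<longleftrightarrow> (\<forall>A\<in>F. finite A) \<and> hereditary F \<and> spreading F \<and> compact_family F"

definition block_seq :: "nat set list \<Rightarrow> bool" where
  "block_seq Es \<longleftrightarrow> (\<forall>E\<in>set Es. finite E \<and> E \<noteq> {}) \<and>
     (\<forall>i j. i < j \<and> j < length Es \<longrightarrow> Max (Es ! i) < Min (Es ! j))"

definition admissible :: "nat set set \<Rightarrow> nat set list \<Rightarrow> bool" where
  "admissible M Es \<longleftrightarrow> block_seq Es \<and> Min ` set Es \<in> M"

definition family_comp :: "nat set set \<Rightarrow> nat set set \<Rightarrow> nat set set" where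
  "family_comp M N = {\<Union>(set Es) | Es. admissible M Es \<and> set Es \<subseteq> N}"

end

theory Submission
  imports Defs
begin

text \<open>Let \<open>E\<^sub>1 < \<dots> < E\<^sub>m\<close> be an \<open>\<G>\<close>-admissible sequence of members of \<open>\<H>\<close> with the same
  union as the \<open>F\<^sub>j\<close>, and let \<open>E\<^bsub>i(j)\<^esub>\<close> be the block containing \<open>min F\<^sub>j\<close>. As \<open>F\<^sub>j \<notin> \<H>\<close> and
  \<open>\<H>\<close> is hereditary, \<open>F\<^sub>j\<close> reaches past \<open>E\<^bsub>i(j)\<^esub>\<close>, so \<open>min F\<^bsub>j+1\<^esub>\<close> lies in a later block and
  \<open>i\<close> is strictly increasing. Hence \<open>{min E\<^bsub>i(j)\<^esub>}\<close> is a subset of \<open>{min E\<^sub>i} \<in> \<G>\<close>, and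
  \<open>min E\<^bsub>i(j)\<^esub> \<le> min F\<^sub>j\<close> termwise, so spreading moves it onto \<open>{min F\<^sub>j}\<close>.\<close>

lemma spreading_pointwise_le:
  fixes g h :: "'a::linorder \<Rightarrow> nat"
  assumes "spreading F" and "g ` I \<in> F"
    and g: "strict_mono_on I g" and h: "strict_mono_on I h"
    and "\<forall>i\<in>I. g i \<le> h i"
  shows "h ` I \<in> F"
proof -
  define f where "f = h \<circ> the_inv_into I g"
  have f_g: "f (g i) = h i" if "i \<in> I" for i
    using the_inv_into_f_f[OF strict_mono_on_imp_inj_on[OF g] that] by (simp add: f_def)
  have "strict_mono_on (g ` I) f"
  proof (rule strict_mono_onI)
    fix r s assume "r \<in> g ` I" "s \<in> g ` I" "r < s"
    then obtain i i' where "i \<in> I" "i' \<in> I" "r = g i" "s = g i'" "i < i'"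
      using strict_mono_on_less[OF g] by blast
    then show "f r < f s" using f_g strict_mono_onD[OF h] by simp
  qed
  moreover have "\<forall>n\<in>g ` I. n \<le> f n" using assms(5) f_g by auto
  ultimately have "f ` g ` I \<in> F" using assms(1,2) unfolding spreading_def by blast
  moreover have "f ` g ` I = h ` I" using f_g by (simp add: image_image)
  ultimately show ?thesis by simp
qed

lemma block_seq_Min_mem:
  assumes "block_seq Es" "i < length Es"
  shows "Min (Es ! i) \<in> Es ! i"
  using assms nth_mem unfolding block_seq_def by auto

lemma block_seq_elem_less:
  assumes "block_seq Es" "i < i'" "i' < length Es" "x \<in> Es ! i" "y \<in> Es ! i'"
  shows "x < y"
proof -
  have "finite (Es ! i)" "finite (Es ! i')"
    using assms(1-3) nth_mem unfolding block_seq_def by (metis less_trans)+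
  then have "x \<le> Max (Es ! i)" "Min (Es ! i') \<le> y" using assms(4,5) by simp_all
  moreover have "Max (Es ! i) < Min (Es ! i')" using assms(1-3) unfolding block_seq_def by blast
  ultimately show ?thesis by linarith
qed

lemma block_seq_index_le:
  assumes "block_seq Es" "i < length Es" "x \<in> Es ! i" "y \<in> Es ! i'" "x \<le> y"
  shows "i \<le> i'"
  using block_seq_elem_less[OF assms(1) _ assms(2) assms(4,3)] assms(5) by (meson not_le)

lemma block_seq_strict_mono_Min:
  assumes "block_seq Es"
  shows "strict_mono_on {..<length Es} (\<lambda>i. Min (Es ! i))"
proof (rule strict_mono_onI)
  fix i i' assume "i \<in> {..<length Es}" "i' \<in> {..<length Es}" "i < i'"
  then show "Min (Es ! i) < Min (Es ! i')"
    using block_seq_elem_less[OF assms] block_seq_Min_mem[OF assms] by (meson lessThan_iff)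
qed

lemma block_seq_strict_mono_block_index:
  assumes Es: "block_seq Es" and Fs: "block_seq Fs" and covered: "\<Union>(set Fs) \<subseteq> \<Union>(set Es)"
    and not_within_block: "\<forall>j<length Fs. \<forall>E\<in>set Es. \<not> Fs ! j \<subseteq> E"
  obtains ix where "strict_mono_on {..<length Fs} ix"
    and "\<forall>j<length Fs. ix j < length Es \<and> Min (Fs ! j) \<in> Es ! ix j"
proof -
  have in_block: "\<exists>i<length Es. x \<in> Es ! i" if "x \<in> Fs ! j" "j < length Fs" for x j
  proof -
    have "x \<in> \<Union>(set Es)" using covered that nth_mem by blast
    then show ?thesis by (auto simp: in_set_conv_nth)
  qed
  have Min_in_block: "\<forall>j. \<exists>i. j < length Fs \<longrightarrow> i < length Es \<and> Min (Fs ! j) \<in> Es ! i"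
    using in_block[OF block_seq_Min_mem[OF Fs]] by blast
  obtain ix where ix: "\<And>j. j < length Fs \<Longrightarrow> ix j < length Es \<and> Min (Fs ! j) \<in> Es ! ix j"
    using choice[OF Min_in_block] by blast
  have "ix j < ix j'" if "j < j'" "j' < length Fs" for j j'
  proof (rule ccontr)
    assume "\<not> ix j < ix j'"
    have j: "j < length Fs" using that by simp
    have "\<not> Fs ! j \<subseteq> Es ! ix j" using not_within_block ix[OF j] j nth_mem by blast
    then obtain x where x: "x \<in> Fs ! j" "x \<notin> Es ! ix j" by blast
    then obtain i where i: "i < length Es" "x \<in> Es ! i" using in_block j by blast
    have "finite (Fs ! j)" using Fs j nth_mem unfolding block_seq_def by blast
    then have "Min (Fs ! j) \<le> x" using x(1) by simp
    then have "ix j \<le> i" using block_seq_index_le[OF Es _ _ i(2)] ix[OF j] by blast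
    have "x < Min (Fs ! j')"
      using block_seq_elem_less[OF Fs that x(1) block_seq_Min_mem[OF Fs that(2)]] .
    then have "i \<le> ix j'" using block_seq_index_le[OF Es i conjunct2[OF ix[OF that(2)]]] by simp
    with \<open>ix j \<le> i\<close> \<open>\<not> ix j < ix j'\<close> have "i = ix j" by linarith
    then show False using x(2) i(2) by simp
  qed
  then have "strict_mono_on {..<length Fs} ix" by (intro strict_mono_onI) simp
  with ix show thesis using that by blast
qed

theorem lemma2:
  fixes G H :: "nat set set" and Fs :: "nat set list"
  assumes "regular_family G" and "regular_family H"
    and "block_seq Fs"
    and "\<Union>(set Fs) \<in> family_comp G H"
    and "\<forall>j < length Fs. Fs ! j \<notin> H"
  shows "Min ` set Fs \<in> G"
proof -
  obtain Es where Es: "\<Union>(set Fs) = \<Union>(set Es)" "block_seq Es" "Min ` set Es \<in> G" "set Es \<subseteq> H"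
    using assms(4) unfolding family_comp_def admissible_def by auto
  have "\<forall>j<length Fs. \<forall>E\<in>set Es. \<not> Fs ! j \<subseteq> E"
    using assms(2,5) Es(4) unfolding regular_family_def hereditary_def by blast
  then obtain ix where ix_mono: "strict_mono_on {..<length Fs} ix"
    and ix: "\<forall>j<length Fs. ix j < length Es \<and> Min (Fs ! j) \<in> Es ! ix j"
    using block_seq_strict_mono_block_index[OF Es(2) assms(3)] Es(1) by blast
  define g where "g = (\<lambda>i. Min (Es ! i)) \<circ> ix"
  have "g ` {..<length Fs} \<subseteq> Min ` set Es" using ix nth_mem by (auto simp: g_def)
  then have "g ` {..<length Fs} \<in> G"
    using Es(3) assms(1) unfolding regular_family_def hereditary_def by blast
  moreover have "strict_mono_on {..<length Fs} g"
    unfolding g_def using ix by (intro monotone_on_o[OF block_seq_strict_mono_Min[OF Es(2)] ix_mono]) auto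
  moreover have "\<forall>j\<in>{..<length Fs}. g j \<le> Min (Fs ! j)"
    using ix Es(2) nth_mem unfolding g_def block_seq_def by auto
  ultimately have "(\<lambda>j. Min (Fs ! j)) ` {..<length Fs} \<in> G"
    using spreading_pointwise_le block_seq_strict_mono_Min[OF assms(3)] assms(1)
    unfolding regular_family_def by blast
  moreover have "(\<lambda>j. Min (Fs ! j)) ` {..<length Fs} = Min ` set Fs"
    by (auto simp: in_set_conv_nth intro!: imageI)
  ultimately show ?thesis by simp
qed

end
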